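(* Let $\lambda\in\mathbb Q\cup\{\infty\}$, $i\in\{2,3,6\}$ and $\ell\in\mathbb Z_{>0}$ not divisible by $i$. Write $\lambda=b/a$ with $a\in\mathbb N$, $b\in\mathbb Z$, $\gcd(a,b)=\ell$ (for $\lambda=\infty$ take $a=0$, $b=\ell$), and write $a=ia'+a''$, $b=ib'+b''$ with $a',a'',b',b''\in\mathbb Z$, $0\le a'',b''\le i-1$. Then $$R^\lambda_\ell(i)=\{a'h_0+b'h_\infty+r\mid r\in R_{[a'',b'']}(i)\}.$$
   Context: Let $V=\{1_1,1_2,2_1,2_2,3_0,3_1,4_0,4_1,5_{-1},5_0\}$ and identify $\mathbb Z^{10}=\mathbb Z^V$. Let $A$ be the set of 12 arrows $2_2\to1_2$, $1_2\to2_1$, $3_1\to2_1$, $2_2\to3_1$, $4_1\to3_1$, $3_1\to4_0$, $5_0\to4_0$, $4_1\to5_0$, $2_1\to1_1$, $2_1\to3_0$, $4_0\to3_0$, $4_0\to5_{-1}$, and let $P=\{(2_2,2_1),(4_1,4_0),(1_2,1_1),(3_1,3_0),(5_0,5_{-1})\}$. The Ringel form is $\langle d,e\rangle=\sum_{v\in V}d_ve_v-\sum_{(v\to w)\in A}d_ve_w+\sum_{(v,w)\in P}d_ve_w$. Write $\langle d,e\rangle=d^{t}Ee$ and $\Phi=-E^{-1}E^{t}$ (integral, $\Phi^6=\mathrm{id}$). Let $q(d)=\langle d,d\rangle$, $R=\{d\neq0: q(d)\in\{0,1\}\}$. Let $h_0$ have entries $(1,1,3,0,2,2,3,0,1,1)$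 and $h_\infty$ entries $(0,1,1,1,0,2,1,1,0,1)$ at the vertices $(1_1,1_2,2_1,2_2,3_0,3_1,4_0,4_1,5_{-1},5_0)$. $R^+=\{d\in R: \langle d,h_\infty\rangle>0\text{ or }(\langle d,h_\infty\rangle=0\text{ and }\langle h_0,d\rangle>0)\}$; the slope of $d\in R^+$ is $\langle h_0,d\rangle/\langle d,h_\infty\rangle\in\mathbb Q\cup\{\infty\}$, $R^\lambda$ the positive roots of slope $\lambda$. $\operatorname{rk}(d)$ is the least $m\ge1$ with $\Phi^m(d)=d$, $h(d)=\sum_{j=1}^{\operatorname{rk}(d)}\Phi^j(d)$, $\operatorname{ql}(d)$ the gcd of the entries of $h(d)$, and $R^\lambda_\ell(i)=\{d\in R^\lambda:\operatorname{rk}(d)=i,\operatorname{ql}(d)=\ell\}$. For $0\le m,n\le i-1$, $(m,n)\ne(0,0)$, set $R_{[m,n]}(i)=R^{n/m}_{\gcd(m,n)}(i)$ (with $n/0=\infty$). *)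

theory Defs
  imports Complex_Main
begin

text \<open>Vertex set V, in the order (1_1,1_2,2_1,2_2,3_0,3_1,4_0,4_1,5_{-1},5_0).
  V5m1 stands for 5_{-1}.\<close>
datatype vert = V1_1 | V1_2 | V2_1 | V2_2 | V3_0 | V3_1 | V4_0 | V4_1 | V5m1 | V5_0

lemma UNIV_vert: "(UNIV :: vert set) = {V1_1, V1_2, V2_1, V2_2, V3_0, V3_1, V4_0, V4_1, V5m1, V5_0}"
  using vert.exhaust by auto

instance vert :: finite
  by standard (simp add: UNIV_vert)

type_synonym zvec = "vert \<Rightarrow> int"

definition arrows :: "(vert \<times> vert) list" where
  "arrows = [(V2_2,V1_2), (V1_2,V2_1), (V3_1,V2_1), (V2_2,V3_1), (V4_1,V3_1), (V3_1,V4_0),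
             (V5_0,V4_0), (V4_1,V5_0), (V2_1,V1_1), (V2_1,V3_0), (V4_0,V3_0), (V4_0,V5m1)]"

definition Ppairs :: "(vert \<times> vert) list" where
  "Ppairs = [(V2_2,V2_1), (V4_1,V4_0), (V1_2,V1_1), (V3_1,V3_0), (V5_0,V5m1)]"

text \<open>Matrix E of the Ringel form: <d,e> = d^t E e.\<close>
definition Emat :: "vert \<Rightarrow> vert \<Rightarrow> int" where
  "Emat v w = (if v = w then 1 else 0)
     - int (length (filter (\<lambda>p. p = (v,w)) arrows))
     + int (length (filter (\<lambda>p. p = (v,w)) Ppairs))"

definition ringel :: "zvec \<Rightarrow> zvec \<Rightarrow> int" where
  "ringel d e = (\<Sum>v\<in>UNIV. d v * e v)
     - (\<Sum>(v,w)\<leftarrow>arrows. d v * e w)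
     + (\<Sum>(v,w)\<leftarrow>Ppairs. d v * e w)"

text \<open>Coxeter transformation \<Phi> = -E^{-1} E^t: \<Phi> d is the (unique) vector x with E x = - E^t d.\<close>
definition Phi :: "zvec \<Rightarrow> zvec" where
  "Phi d = (THE x. \<forall>v. (\<Sum>w\<in>UNIV. Emat v w * x w) = - (\<Sum>w\<in>UNIV. Emat w v * d w))"

definition qform :: "zvec \<Rightarrow> int" where
  "qform d = ringel d d"

definition Roots :: "zvec set" where
  "Roots = {d. d \<noteq> (\<lambda>_. 0) \<and> qform d \<in> {0,1}}"

definition h0 :: zvec where
  "h0 v = (case v of V1_1 \<Rightarrow> 1 | V1_2 \<Rightarrow> 1 | V2_1 \<Rightarrow> 3 | V2_2 \<Rightarrow> 0 | V3_0 \<Rightarrow> 2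
     | V3_1 \<Rightarrow> 2 | V4_0 \<Rightarrow> 3 | V4_1 \<Rightarrow> 0 | V5m1 \<Rightarrow> 1 | V5_0 \<Rightarrow> 1)"

definition hinf :: zvec where
  "hinf v = (case v of V1_1 \<Rightarrow> 0 | V1_2 \<Rightarrow> 1 | V2_1 \<Rightarrow> 1 | V2_2 \<Rightarrow> 1 | V3_0 \<Rightarrow> 0
     | V3_1 \<Rightarrow> 2 | V4_0 \<Rightarrow> 1 | V4_1 \<Rightarrow> 1 | V5m1 \<Rightarrow> 0 | V5_0 \<Rightarrow> 1)"

definition Rplus :: "zvec set" where
  "Rplus = {d \<in> Roots. ringel d hinf > 0 \<or> (ringel d hinf = 0 \<and> ringel h0 d > 0)}"

text \<open>Slopes live in \<rat> \<union> {\<infinity>}, represented as rat option with None = \<infinity>.\<close>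
definition slope :: "zvec \<Rightarrow> rat option" where
  "slope d = (if ringel d hinf = 0 then None
              else Some (of_int (ringel h0 d) / of_int (ringel d hinf)))"

definition Rslope :: "rat option \<Rightarrow> zvec set" where
  "Rslope lam = {d \<in> Rplus. slope d = lam}"

definition rk :: "zvec \<Rightarrow> nat" where
  "rk d = (LEAST m. m \<ge> 1 \<and> (Phi ^^ m) d = d)"

definition hvec :: "zvec \<Rightarrow> zvec" where
  "hvec d = (\<lambda>v. \<Sum>j=1..rk d. (Phi ^^ j) d v)"

definition ql :: "zvec \<Rightarrow> int" where
  "ql d = Gcd (range (hvec d))"

definition Rsl :: "rat option \<Rightarrow> int \<Rightarrow> nat \<Rightarrow> zvec set" where
  "Rsl lam l i = {d \<in> Rslope lam. rk d = i \<and> ql d = l}"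

definition Rbr :: "int \<Rightarrow> int \<Rightarrow> nat \<Rightarrow> zvec set" where
  "Rbr m n i = Rsl (if m = 0 then None else Some (of_int n / of_int m)) (gcd m n) i"

end

theory Submission
  imports Defs
begin

text \<open>
  The Coxeter transformation Phi has order 6 (Phi^3 is the reflection of the quiver exchanging
  the vertices 1 and 5, 2 and 4), and its fixed vectors are exactly the integral combinations
  p h_0 + q h_inf. The pairings <-,h_inf> and <h_0,-> are Phi-invariant and take the values 6p
  and 6q on such a combination. Hence, for d of rank i, the orbit sum h(d) equals p h_0 + q h_inf
  with (6p, 6q) = i (<d,h_inf>, <h_0,d>): positivity and slope of d are those of (p,q), and
  ql(d) = gcd(p,q), so d lies in R^lambda_l(i) iff d is a root of rank i with
  h(d) = a h_0 + b h_inf. Adding a' h_0 + b' h_inf to d changes neither q nor the rank, and adds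
  i (a' h_0 + b' h_inf) to h(d); this reduces (a,b) to (a'',b''), which is nonzero as i does not
  divide l.
\<close>

lemma sum_UNIV_vert:
  "(\<Sum>v\<in>UNIV. f v) =
    f V1_1 + f V1_2 + f V2_1 + f V2_2 + f V3_0 + f V3_1 + f V4_0 + f V4_1 + f V5m1 + f V5_0"
  by (simp add: UNIV_vert add.assoc)

fun coxeter :: "zvec \<Rightarrow> zvec" where
  "coxeter d V1_1 = - d V1_1 - d V1_2 + d V2_1"
| "coxeter d V1_2 = - d V3_0 + d V4_0"
| "coxeter d V2_1 = - d V1_1 + d V2_1 - d V2_2 - d V3_0 + d V4_0"
| "coxeter d V2_2 = - d V3_0 + d V4_0 - d V5m1"
| "coxeter d V3_0 = d V2_1 - d V3_0 - d V3_1 + d V4_0"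
| "coxeter d V3_1 = - d V1_1 + d V2_1 - d V3_0 + d V4_0 - d V5m1"
| "coxeter d V4_0 = d V2_1 - d V3_0 + d V4_0 - d V4_1 - d V5m1"
| "coxeter d V4_1 = - d V1_1 + d V2_1 - d V3_0"
| "coxeter d V5m1 = d V4_0 - d V5m1 - d V5_0"
| "coxeter d V5_0 = d V2_1 - d V3_0"

lemma Phi_eq_coxeter: "Phi = coxeter"
proof
  fix d
  show "Phi d = coxeter d"
    unfolding Phi_def
  proof (rule the_equality)
    show "\<forall>v. (\<Sum>w\<in>UNIV. Emat v w * coxeter d w) = - (\<Sum>w\<in>UNIV. Emat w v * d w)"
    proof
      fix v
      show "(\<Sum>w\<in>UNIV. Emat v w * coxeter d w) = - (\<Sum>w\<in>UNIV. Emat w v * d w)"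
        by (cases v) (simp_all add: sum_UNIV_vert Emat_def arrows_def Ppairs_def)
    qed
  next
    fix x
    assume "\<forall>v. (\<Sum>w\<in>UNIV. Emat v w * x w) = - (\<Sum>w\<in>UNIV. Emat w v * d w)"
    then have eqs: "(\<Sum>w\<in>UNIV. Emat v w * x w) = - (\<Sum>w\<in>UNIV. Emat w v * d w)" for v
      by blast
    note system = eqs[of V1_1] eqs[of V1_2] eqs[of V2_1] eqs[of V2_2] eqs[of V3_0]
      eqs[of V3_1] eqs[of V4_0] eqs[of V4_1] eqs[of V5m1] eqs[of V5_0]
    show "x = coxeter d"
    proof
      fix v
      show "x v = coxeter d v"
        using system by (cases v) (simp_all add: sum_UNIV_vert Emat_def arrows_def Ppairs_def)
    qed
  qed
qed

fun mirror :: "vert \<Rightarrow> vert" where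
  "mirror V1_1 = V5m1"
| "mirror V1_2 = V5_0"
| "mirror V2_1 = V4_0"
| "mirror V2_2 = V4_1"
| "mirror V3_0 = V3_0"
| "mirror V3_1 = V3_1"
| "mirror V4_0 = V2_1"
| "mirror V4_1 = V2_2"
| "mirror V5m1 = V1_1"
| "mirror V5_0 = V1_2"

lemma coxeter_cube: "(coxeter ^^ 3) d = d \<circ> mirror"
proof
  fix v
  show "(coxeter ^^ 3) d v = (d \<circ> mirror) v"
    by (cases v) (simp_all add: numeral_eq_Suc)
qed

lemma coxeter_period: "(coxeter ^^ 6) d = d"
proof -
  have "mirror \<circ> mirror = id"
  proof
    fix v
    show "(mirror \<circ> mirror) v = id v" by (cases v) simp_all
  qed
  moreover have "(coxeter ^^ 6) d = (coxeter ^^ 3) ((coxeter ^^ 3) d)"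
    by (simp add: funpow_add[of 3 3, simplified])
  ultimately show ?thesis
    by (simp add: coxeter_cube comp_assoc)
qed

definition hcomb :: "int \<Rightarrow> int \<Rightarrow> zvec" where
  "hcomb p q = (\<lambda>v. p * h0 v + q * hinf v)"

lemma hcomb_inject: "hcomb p q = hcomb p' q' \<longleftrightarrow> p = p' \<and> q = q'"
proof
  assume "hcomb p q = hcomb p' q'"
  then have "hcomb p q V1_1 = hcomb p' q' V1_1" "hcomb p q V2_2 = hcomb p' q' V2_2"
    by simp_all
  then show "p = p' \<and> q = q'" by (simp add: hcomb_def h0_def hinf_def)
qed simp

lemma Gcd_range_hcomb: "Gcd (range (hcomb p q)) = gcd p q"
proof (rule zdvd_antisym_nonneg)
  have "Gcd (range (hcomb p q)) dvd hcomb p q V1_1" "Gcd (range (hcomb p q)) dvd hcomb p q V2_2"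
    by (simp_all add: Gcd_dvd)
  then show "Gcd (range (hcomb p q)) dvd gcd p q"
    by (simp add: hcomb_def h0_def hinf_def)
  show "gcd p q dvd Gcd (range (hcomb p q))"
    by (rule Gcd_greatest) (auto simp: hcomb_def)
qed simp_all

lemma coxeter_fixed_eq_hcomb:
  assumes "coxeter x = x"
  shows "x = hcomb (x V1_1) (x V2_2)"
proof -
  have fix_eqs: "coxeter x v = x v" for v
    using assms by simp
  note system = fix_eqs[of V1_1] fix_eqs[of V1_2] fix_eqs[of V2_1] fix_eqs[of V2_2]
    fix_eqs[of V3_0] fix_eqs[of V3_1] fix_eqs[of V4_0] fix_eqs[of V4_1] fix_eqs[of V5m1]
    fix_eqs[of V5_0]
  show ?thesis
  proof
    fix v
    show "x v = hcomb (x V1_1) (x V2_2) v"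
      using system by (cases v) (simp_all add: hcomb_def h0_def hinf_def)
  qed
qed

lemma coxeter_sum: "coxeter (\<lambda>v. \<Sum>j\<in>J. f j v) = (\<lambda>v. \<Sum>j\<in>J. coxeter (f j) v)"
proof
  fix v
  show "coxeter (\<lambda>v. \<Sum>j\<in>J. f j v) v = (\<Sum>j\<in>J. coxeter (f j) v)"
    by (cases v) (simp_all add: sum.distrib sum_subtractf sum_negf)
qed

lemma ringel_hinf_eq: "ringel d hinf = d V2_1 - d V2_2 + d V4_0 - d V4_1"
  by (simp add: ringel_def sum_UNIV_vert arrows_def Ppairs_def hinf_def)

lemma ringel_h0_eq:
  "ringel h0 d = - d V1_1 + d V1_2 - 2 * d V3_0 + 2 * d V3_1 - d V5m1 + d V5_0"
  by (simp add: ringel_def sum_UNIV_vert arrows_def Ppairs_def h0_def)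

lemma ringel_funpow_coxeter_hinf: "ringel ((coxeter ^^ m) d) hinf = ringel d hinf"
  by (induction m) (simp_all add: ringel_hinf_eq)

lemma ringel_h0_funpow_coxeter: "ringel h0 ((coxeter ^^ m) d) = ringel h0 d"
  by (induction m) (simp_all add: ringel_h0_eq)

lemma ringel_sum_hinf: "ringel (\<lambda>v. \<Sum>j\<in>J. f j v) hinf = (\<Sum>j\<in>J. ringel (f j) hinf)"
  by (simp add: ringel_hinf_eq sum.distrib sum_subtractf)

lemma ringel_h0_sum: "ringel h0 (\<lambda>v. \<Sum>j\<in>J. f j v) = (\<Sum>j\<in>J. ringel h0 (f j))"
  by (simp add: ringel_h0_eq sum.distrib sum_subtractf sum_negf sum_distrib_left)

lemma ringel_hcomb_hinf: "ringel (hcomb p q) hinf = 6 * p"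
  by (simp add: ringel_hinf_eq hcomb_def h0_def hinf_def)

lemma ringel_h0_hcomb: "ringel h0 (hcomb p q) = 6 * q"
  by (simp add: ringel_h0_eq hcomb_def h0_def hinf_def)

lemma rk_eq_Least_coxeter: "rk d = (LEAST m. 1 \<le> m \<and> (coxeter ^^ m) d = d)"
  by (simp add: rk_def Phi_eq_coxeter)

lemma funpow_coxeter_rk: "(coxeter ^^ rk d) d = d"
proof -
  have "1 \<le> rk d \<and> (coxeter ^^ rk d) d = d"
    unfolding rk_eq_Least_coxeter by (rule LeastI[of _ 6]) (simp add: coxeter_period)
  then show ?thesis ..
qed

lemma hvec_eq_sum_coxeter: "hvec d = (\<lambda>v. \<Sum>j=1..rk d. (coxeter ^^ j) d v)"
  by (simp add: hvec_def Phi_eq_coxeter)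

lemma sum_funpow_periodic_shift:
  fixes g :: "'a \<Rightarrow> 'b::comm_monoid_add"
  assumes "(f ^^ k) x = x"
  shows "(\<Sum>j=1..k. g ((f ^^ Suc j) x)) = (\<Sum>j=1..k. g ((f ^^ j) x))"
proof (cases "k = 0")
  case False
  have "(\<Sum>j=1..k. g ((f ^^ Suc j) x)) = (\<Sum>j=Suc 1..Suc k. g ((f ^^ j) x))"
    by (simp only: sum.shift_bounds_cl_Suc_ivl)
  also have "\<dots> = (\<Sum>j=Suc 1..k. g ((f ^^ j) x)) + g ((f ^^ Suc k) x)"
    using False by (simp add: sum.cl_ivl_Suc)
  also have "(f ^^ Suc k) x = (f ^^ 1) x"
    using assms by simp
  also have "(\<Sum>j=Suc 1..k. g ((f ^^ j) x)) + g ((f ^^ 1) x) = (\<Sum>j=1..k. g ((f ^^ j) x))"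
    using False by (simp add: sum.atLeast_Suc_atMost add.commute)
  finally show ?thesis .
qed simp

lemma coxeter_hvec: "coxeter (hvec d) = hvec d"
proof -
  have "coxeter (hvec d) = (\<lambda>v. \<Sum>j=1..rk d. (coxeter ^^ Suc j) d v)"
    by (simp add: hvec_eq_sum_coxeter coxeter_sum)
  also have "\<dots> = hvec d"
    unfolding hvec_eq_sum_coxeter
    by (rule ext, rule sum_funpow_periodic_shift[OF funpow_coxeter_rk])
  finally show ?thesis .
qed

lemma hvec_eq_hcomb:
  obtains p q where "hvec d = hcomb p q"
    and "6 * p = int (rk d) * ringel d hinf" and "6 * q = int (rk d) * ringel h0 d"
proof
  let ?p = "hvec d V1_1" and ?q = "hvec d V2_2"
  show hvec: "hvec d = hcomb ?p ?q"
    by (rule coxeter_fixed_eq_hcomb[OF coxeter_hvec])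
  have "6 * ?p = ringel (hvec d) hinf"
    by (subst hvec) (simp add: ringel_hcomb_hinf)
  also have "\<dots> = int (rk d) * ringel d hinf"
    by (simp add: hvec_eq_sum_coxeter ringel_sum_hinf ringel_funpow_coxeter_hinf)
  finally show "6 * ?p = int (rk d) * ringel d hinf" .
  have "6 * ?q = ringel h0 (hvec d)"
    by (subst hvec) (simp add: ringel_h0_hcomb)
  also have "\<dots> = int (rk d) * ringel h0 d"
    by (simp add: hvec_eq_sum_coxeter ringel_h0_sum ringel_h0_funpow_coxeter)
  finally show "6 * ?q = int (rk d) * ringel h0 d" .
qed

definition pos_pair :: "int \<Rightarrow> int \<Rightarrow> bool" where
  "pos_pair a b \<longleftrightarrow> 0 < a \<or> (a = 0 \<and> 0 < b)"

definition slope_of :: "int \<Rightarrow> int \<Rightarrow> rat option" where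
  "slope_of a b = (if a = 0 then None else Some (of_int b / of_int a))"

lemma Rplus_iff: "d \<in> Rplus \<longleftrightarrow> d \<in> Roots \<and> pos_pair (ringel d hinf) (ringel h0 d)"
  by (auto simp: Rplus_def pos_pair_def)

lemma slope_eq_slope_of: "slope d = slope_of (ringel d hinf) (ringel h0 d)"
  by (simp add: slope_def slope_of_def)

lemma Rbr_eq_Rsl: "Rbr m n i = Rsl (slope_of m n) (gcd m n) i"
  by (simp add: Rbr_def slope_of_def)

lemma pos_pair_scale:
  assumes "0 < s" "0 < k" "s * p = k * a" "s * q = k * b"
  shows "pos_pair p q \<longleftrightarrow> pos_pair a b"
proof -
  have "0 < p \<longleftrightarrow> 0 < s * p" "0 < a \<longleftrightarrow> 0 < k * a"
    "0 < q \<longleftrightarrow> 0 < s * q" "0 < b \<longleftrightarrow> 0 < k * b"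
    using assms(1,2) by (simp_all add: zero_less_mult_iff)
  moreover have "p = 0 \<longleftrightarrow> a = 0"
    using assms by (metis mult_eq_0_iff less_irrefl)
  ultimately show ?thesis
    using assms(3,4) by (simp add: pos_pair_def)
qed

lemma slope_of_scale:
  assumes "0 < s" "0 < k" "s * p = k * a" "s * q = k * b"
  shows "slope_of p q = slope_of a b"
proof -
  have "p = 0 \<longleftrightarrow> a = 0"
    using assms by (metis mult_eq_0_iff less_irrefl)
  moreover have "of_int q / of_int p = (of_int b / of_int a :: rat)" if "p \<noteq> 0" "a \<noteq> 0"
  proof -
    have "q * a = b * p"
      using assms by (metis mult.left_commute mult.commute mult_cancel_left less_irrefl)
    then show ?thesis
      using that by (simp add: frac_eq_eq) (metis of_int_mult)
  qed
  ultimately show ?thesis by (simp add: slope_of_def)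
qed

lemma pos_pair_eq_if_same_slope_gcd:
  assumes "pos_pair a b" "pos_pair c d"
    and "slope_of a b = slope_of c d" and "gcd a b = gcd c d"
  shows "a = c \<and> b = d"
proof (cases "a = 0")
  case True
  then show ?thesis
    using assms by (auto simp: pos_pair_def slope_of_def split: if_splits)
next
  case False
  then have a: "0 < a" and c: "0 < c"
    using assms by (auto simp: pos_pair_def slope_of_def split: if_splits)
  then have "of_int b / of_int a = (of_int d / of_int c :: rat)"
    using assms(3) by (simp add: slope_of_def)
  then have "of_int (b * c) = (of_int (d * a) :: rat)"
    using a c by (simp add: frac_eq_eq)
  then have bc: "b * c = d * a"
    by (simp only: of_int_eq_iff)
  have "c * gcd a b = gcd (c * a) (c * b)"
    using c by (simp add: gcd_mult_left)
  also have "\<dots> = gcd (a * c) (a * d)"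
    using bc by (simp add: algebra_simps)
  also have "\<dots> = a * gcd a b"
    using a assms(4) by (simp add: gcd_mult_left)
  finally have "c = a"
    using a by simp
  then show ?thesis
    using bc a by simp
qed

lemma mem_Rsl_slope_of_iff:
  assumes "0 < i" "pos_pair a b"
  shows "d \<in> Rsl (slope_of a b) (gcd a b) i \<longleftrightarrow> d \<in> Roots \<and> rk d = i \<and> hvec d = hcomb a b"
proof (cases "rk d = i")
  case True
  obtain p q where hvec: "hvec d = hcomb p q"
    and p: "6 * p = int i * ringel d hinf" and q: "6 * q = int i * ringel h0 d"
    using hvec_eq_hcomb True by metis
  have "pos_pair p q \<longleftrightarrow> pos_pair (ringel d hinf) (ringel h0 d)"
    using assms(1) p q by (intro pos_pair_scale) simp_all
  moreover have "slope_of p q = slope d"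
    unfolding slope_eq_slope_of using assms(1) p q by (intro slope_of_scale) simp_all
  moreover have "ql d = gcd p q"
    by (simp add: ql_def hvec Gcd_range_hcomb)
  moreover have "pos_pair p q \<and> slope_of p q = slope_of a b \<and> gcd p q = gcd a b
      \<longleftrightarrow> p = a \<and> q = b"
    using assms(2) pos_pair_eq_if_same_slope_gcd by blast
  ultimately show ?thesis
    using True by (auto simp: Rsl_def Rslope_def Rplus_iff hvec hcomb_inject)
qed (simp add: Rsl_def)

definition shift :: "int \<Rightarrow> int \<Rightarrow> zvec \<Rightarrow> zvec" where
  "shift p q d = (\<lambda>v. hcomb p q v + d v)"

lemma shift_shift: "shift p q (shift p' q' d) = shift (p + p') (q + q') d"
  by (simp add: shift_def hcomb_def algebra_simps)

lemma shift_0: "shift 0 0 d = d"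
  by (simp add: shift_def hcomb_def)

lemma shift_hcomb: "shift p q (hcomb p' q') = hcomb (p + p') (q + q')"
  by (simp add: shift_def hcomb_def algebra_simps)

lemma shift_inject: "shift p q x = shift p q y \<longleftrightarrow> x = y"
  by (metis add.left_inverse shift_0 shift_shift)

lemma surj_shift: "surj (shift p q)"
  by (metis surjI add.right_inverse shift_0 shift_shift)

lemma coxeter_shift: "coxeter (shift p q d) = shift p q (coxeter d)"
proof
  fix v
  show "coxeter (shift p q d) v = shift p q (coxeter d) v"
    by (cases v) (simp_all add: shift_def hcomb_def h0_def hinf_def)
qed

lemma funpow_coxeter_shift: "(coxeter ^^ m) (shift p q d) = shift p q ((coxeter ^^ m) d)"
  by (induction m) (simp_all add: coxeter_shift)

lemma rk_shift: "rk (shift p q d) = rk d"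
  by (simp add: rk_eq_Least_coxeter funpow_coxeter_shift shift_inject)

lemma hvec_shift: "hvec (shift p q d) = shift (int (rk d) * p) (int (rk d) * q) (hvec d)"
  unfolding hvec_eq_sum_coxeter rk_shift funpow_coxeter_shift
  by (simp add: shift_def hcomb_def sum.distrib algebra_simps)

lemma qform_shift: "qform (shift p q d) = qform d"
  by (simp add: qform_def ringel_def sum_UNIV_vert arrows_def Ppairs_def shift_def hcomb_def
      h0_def hinf_def algebra_simps)

lemma rk_zero: "rk (\<lambda>_. 0) = 1"
proof -
  have "coxeter (\<lambda>_. 0) = (\<lambda>_. 0)"
  proof
    fix v :: vert
    show "coxeter (\<lambda>_. 0) v = 0" by (cases v) simp_all
  qed
  then show ?thesis
    unfolding rk_eq_Least_coxeter by (intro Least_equality) auto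
qed

lemma shift_mem_Roots_iff:
  assumes "rk d \<noteq> 1"
  shows "shift p q d \<in> Roots \<longleftrightarrow> d \<in> Roots"
proof -
  have "d \<noteq> (\<lambda>_. 0)" "shift p q d \<noteq> (\<lambda>_. 0)"
    using assms rk_zero rk_shift by metis+
  then show ?thesis
    by (simp add: Roots_def qform_shift)
qed

lemma shift_mem_Rsl_iff:
  assumes "1 < i" "pos_pair m n" "pos_pair a b"
    and "a = m + int i * p" "b = n + int i * q"
  shows "shift p q d \<in> Rsl (slope_of a b) (gcd a b) i \<longleftrightarrow> d \<in> Rsl (slope_of m n) (gcd m n) i"
proof -
  have "hvec (shift p q d) = hcomb a b \<longleftrightarrow> hvec d = hcomb m n" if "rk d = i"
  proof -
    have "hcomb a b = shift (int i * p) (int i * q) (hcomb m n)"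
      using assms(4,5) by (simp add: shift_hcomb algebra_simps)
    then show ?thesis
      using that by (simp add: hvec_shift shift_inject)
  qed
  then show ?thesis
    using assms(1-3) by (auto simp: mem_Rsl_slope_of_iff rk_shift shift_mem_Roots_iff)
qed

theorem mainTheorem16:
  fixes lam :: "rat option" and i :: nat and l a b a' a'' b' b'' :: int
  assumes "i \<in> {2,3,6}"
    and "l > 0" and "\<not> int i dvd l"
    and "a \<ge> 0" and "gcd a b = l"
    and "(a = 0 \<and> b = l \<and> lam = None) \<or> (a > 0 \<and> lam = Some (of_int b / of_int a))"
    and "a = int i * a' + a''" and "0 \<le> a''" and "a'' \<le> int i - 1"
    and "b = int i * b' + b''" and "0 \<le> b''" and "b'' \<le> int i - 1"
  shows "Rsl lam l i = {(\<lambda>v. a' * h0 v + b' * hinf v + r v) | r. r \<in> Rbr a'' b'' i}"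
proof -
  have i: "1 < i"
    using assms(1) by auto
  have pos: "pos_pair a b"
    using assms(2,6) by (auto simp: pos_pair_def)
  have "\<not> (a'' = 0 \<and> b'' = 0)"
    using assms(3,5,7,10) by auto
  then have pos_rem: "pos_pair a'' b''"
    using assms(8,11) by (auto simp: pos_pair_def)
  have "Rsl lam l i = Rsl (slope_of a b) (gcd a b) i"
    using assms(2,5,6) by (auto simp: slope_of_def)
  also have "\<dots> = shift a' b' ` (shift a' b' -` \<dots>)"
    by (simp add: surj_image_vimage_eq surj_shift)
  also have "shift a' b' -` Rsl (slope_of a b) (gcd a b) i = Rbr a'' b'' i"
    using shift_mem_Rsl_iff[OF i pos_rem pos] assms(7,10)
    by (auto simp: Rbr_eq_Rsl algebra_simps)
  finally show ?thesis
    by (simp add: setcompr_eq_image shift_def hcomb_def)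
qed

end
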